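(* Let $1\le k\le n$ and let $H_1,\dots,H_k\subset\mathbb{E}^n$ be closed halfspaces whose boundary hyperplanes are in general position (their normal vectors are linearly independent). Let $\bar H_i$ be the closure of $\mathbb{E}^n\setminus H_i$, and set $P=\bigcap_{i=1}^kH_i$, $\bar P=\bigcap_{i=1}^k\bar H_i$. Then for every point $\mathbf{p}_0\in\mathbb{E}^n$, $$W_{P,\mathbf{p}_0,n}'(0)+W_{\bar P,\mathbf{p}_0,n}'(0)=0,$$ where $W_{Q,\mathbf{p}_0,n}$ denotes the holomorphic extension to a neighborhood of $s=0$ of the function $s\mapsto s^nV_{Q,\mathbf{p}_0,n}(1/s)$, $s>0$ (such an extension exists for every convex polyhedral set $Q$).
   Context: For a convex polyhedral set $Q\subset\mathbb{E}^n$ (a nonempty intersection of finitely many closed halfspaces) and $\mathbf{p}_0\in\mathbb{E}^n$, $V_{Q,\mathbf{p}_0,n}(r)=\mathrm{Vol}_n[Q\cap B_n(\mathbf{p}_0,r)]$ for $r\ge0$ (and $0$ for $r<0$), where $B_n(\mathbf{p}_0,r)$ is the closed ball of radius $r$ centered at $\mathbf{p}_0$. *)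

theory Defs
  imports "HOL-Analysis.Analysis"
begin

definition ball_vol :: "('a::euclidean_space) set \<Rightarrow> 'a \<Rightarrow> real \<Rightarrow> real" where
  "ball_vol Q p0 r = (if r < 0 then 0 else measure lebesgue (Q \<inter> cball p0 r))"

definition is_W_ext :: "('a::euclidean_space) set \<Rightarrow> 'a \<Rightarrow> (complex \<Rightarrow> complex) \<Rightarrow> bool" where
  "is_W_ext Q p0 W \<longleftrightarrow> (\<exists>e>0. W holomorphic_on ball 0 e \<and>
      (\<forall>s::real. 0 < s \<and> s < e \<longrightarrow>
         W (complex_of_real s) = complex_of_real (s ^ DIM('a) * ball_vol Q p0 (1 / s))))"

end

theory Submission
  imports Defs
begin

(*
  Let C = {x. a i \<bullet> x \<le> 0, i < k} be the polyhedral cone spanned by the inner normals,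
  q a common point of the k boundary hyperplanes (it exists because the normals are linearly
  independent) and d = p0 - q. Then P = q + C and the opposite polyhedron is q - C, so
  rescaling by s > 0 gives, with g v = vol (C \<inter> cball v 1),
      s^n V_P(1/s) = g (s d),        s^n V_(q - C)(1/s) = g (-s d).
  Hence W1 s + W2 s = g (s d) + g (-s d) for small real s > 0. The heart of the proof is the
  estimate  |g v + g (-v) - 2 g 0| = O(|v|^2):  after a translation by v this second difference
  is controlled by the volume of the points that lie both in the symmetric difference of C and
  v + C (they are within |v| of a boundary hyperplane of C) and in the symmetric difference of
  the unit balls about v and 0 (they are within |v| of the unit sphere). That layer is covered
  by k pieces  slab \<inter> shell  of volume O(|v|^2) each. Finally, a holomorphic function whose
  values on a real interval (0,e) stay within O(s^2) of a constant has derivative 0 at 0.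
*)

definition slab :: "'a::euclidean_space \<Rightarrow> real \<Rightarrow> 'a set" where
  "slab u e = {x. \<bar>u \<bullet> x\<bar> \<le> e}"

definition shell :: "real \<Rightarrow> 'a::euclidean_space set" where
  "shell d = {x. 1 - d < norm x \<and> norm x \<le> 1 + d}"

lemma closed_slab: "closed (slab u e)"
  unfolding slab_def by (simp add: closed_Collect_le continuous_intros)

lemma slab_lebesgue_measurable: "slab u e \<in> sets lebesgue"
  by (simp add: borel_closed closed_slab)

lemma slab_cball_lmeasurable: "slab u e \<inter> cball c r \<in> lmeasurable"
  by (metis Int_commute closed_slab compact_Int_closed compact_cball lmeasurable_compact)

lemma shell_lmeasurable: "shell d \<in> lmeasurable"
proof -
  have "shell d = cball 0 (1 + d) - cball (0::'a) (1 - d)" by (auto simp: shell_def)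
  thus ?thesis by (simp add: fmeasurable_Diff borel_closed)
qed

text \<open>Packing bound: about \<open>1/(3\<eta>)\<close> disjoint translates of a thin slab of the unit ball fit
  into the ball of radius 2, so such a slab has volume \<open>O(\<eta>)\<close>.\<close>

lemma slab_unit_ball_measure_le:
  fixes u :: "'a::euclidean_space"
  assumes u: "norm u = 1" and eta: "\<eta> > 0"
  shows "measure lebesgue (slab u \<eta> \<inter> cball 0 1) \<le> 3 * \<eta> * measure lebesgue (cball (0::'a) 2)"
proof -
  define S where "S = slab u \<eta> \<inter> cball (0::'a) 1"
  define N where "N = nat \<lfloor>1 / (3 * \<eta>)\<rfloor>"
  define F where "F j = (+) ((3 * real j * \<eta>) *\<^sub>R u) ` S" for j :: nat
  have N: "real N \<le> 1 / (3 * \<eta>)" "1 / (3 * \<eta>) \<le> real N + 1"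
    using eta by (auto simp: N_def)
  have F_lmeas: "F j \<in> lmeasurable" for j
    unfolding F_def S_def by (intro measurable_translation slab_cball_lmeasurable)
  have F_measure: "measure lebesgue (F j) = measure lebesgue S" for j
    unfolding F_def by (rule measure_translation)
  have F_mem: "\<bar>u \<bullet> x - 3 * real j * \<eta>\<bar> \<le> \<eta> \<and> norm x \<le> 1 + 3 * real j * \<eta>" if xF: "x \<in> F j" for x j
  proof -
    obtain y where y: "y \<in> S" "x = (3 * real j * \<eta>) *\<^sub>R u + y" using xF unfolding F_def by blast
    have "u \<bullet> x = 3 * real j * \<eta> + u \<bullet> y" using y u by (simp add: inner_add_right norm_eq_1)
    moreover have "norm x \<le> 3 * real j * \<eta> + norm y"
      using y u eta norm_triangle_ineq[of "(3 * real j * \<eta>) *\<^sub>R u" y] by simp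
    ultimately show ?thesis using y(1) unfolding S_def slab_def by auto
  qed
  have disjoint: "pairwise (\<lambda>i j. disjnt (F i) (F j)) {..N}"
    unfolding pairwise_def disjnt_def
  proof (intro ballI impI equals0I)
    fix i j x assume "i \<noteq> j" "x \<in> F i \<inter> F j"
    hence "\<bar>u \<bullet> x - 3 * real i * \<eta>\<bar> \<le> \<eta>" "\<bar>u \<bullet> x - 3 * real j * \<eta>\<bar> \<le> \<eta>"
      using F_mem by auto
    hence "\<bar>3 * \<eta> * (real i - real j)\<bar> \<le> 2 * \<eta>" by (simp add: algebra_simps abs_le_iff)
    moreover have "3 * \<eta> * 1 \<le> 3 * \<eta> * \<bar>real i - real j\<bar>"
      using eta \<open>i \<noteq> j\<close> by (intro mult_left_mono) auto
    ultimately show False using eta by (simp add: abs_mult)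
  qed
  have inside: "(\<Union>j\<in>{..N}. F j) \<subseteq> cball 0 2"
  proof clarsimp
    fix j x assume "j \<le> N" "x \<in> F j"
    moreover have "3 * real j * \<eta> \<le> 3 * real N * \<eta>" using \<open>j \<le> N\<close> eta by simp
    moreover have "3 * real N * \<eta> \<le> 1" using N eta by (simp add: field_simps)
    ultimately show "norm x \<le> 2" using F_mem by fastforce
  qed
  have "(real N + 1) * measure lebesgue S = measure lebesgue (\<Union>j\<in>{..N}. F j)"
    using F_lmeas disjoint by (simp add: measure_UNION' F_measure)
  also have "\<dots> \<le> measure lebesgue (cball (0::'a) 2)"
    using inside F_lmeas by (intro measure_mono_fmeasurable) (auto intro: fmeasurableD)
  finally have "1 / (3 * \<eta>) * measure lebesgue S \<le> measure lebesgue (cball (0::'a) 2)"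
    using N(2) by (smt (verit) measure_nonneg mult_right_mono)
  thus ?thesis using eta unfolding S_def by (simp add: field_simps)
qed

lemma slab_cball_rescale:
  fixes u :: "'a::euclidean_space"
  assumes R: "R > 0"
  shows "measure lebesgue (slab u e \<inter> cball 0 R) =
           R ^ DIM('a) * measure lebesgue (slab u (e / R) \<inter> cball 0 1)"
proof -
  have "(\<lambda>x. R *\<^sub>R x + 0) ` (slab u (e / R) \<inter> cball 0 1) = slab u e \<inter> cball 0 R"
  proof (intro equalityI subsetI)
    fix y assume "y \<in> (\<lambda>x. R *\<^sub>R x + 0) ` (slab u (e / R) \<inter> cball 0 1)"
    then obtain x where x: "x \<in> slab u (e / R) \<inter> cball 0 1" "y = R *\<^sub>R x" by auto
    have "\<bar>u \<bullet> y\<bar> = R * \<bar>u \<bullet> x\<bar>" using R x(2) by (simp add: abs_mult)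
    also have "\<dots> \<le> R * (e / R)" using x(1) R by (intro mult_left_mono) (auto simp: slab_def)
    finally have "\<bar>u \<bullet> y\<bar> \<le> e" using R by simp
    moreover have "norm y \<le> R" using x R by (simp add: mult_le_cancel_left1)
    ultimately show "y \<in> slab u e \<inter> cball 0 R" by (simp add: slab_def)
  next
    fix y assume y: "y \<in> slab u e \<inter> cball 0 R"
    have "\<bar>u \<bullet> ((1 / R) *\<^sub>R y)\<bar> = \<bar>u \<bullet> y\<bar> / R" using R by (simp add: abs_mult)
    also have "\<dots> \<le> e / R" using y R by (intro divide_right_mono) (auto simp: slab_def)
    finally have "(1 / R) *\<^sub>R y \<in> slab u (e / R)" by (simp add: slab_def)
    moreover have "norm ((1 / R) *\<^sub>R y) \<le> 1" using y R by simp
    ultimately have "(1 / R) *\<^sub>R y \<in> slab u (e / R) \<inter> cball 0 1" by simp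
    moreover have "y = R *\<^sub>R ((1 / R) *\<^sub>R y) + 0" using R by simp
    ultimately show "y \<in> (\<lambda>x. R *\<^sub>R x + 0) ` (slab u (e / R) \<inter> cball 0 1)" by (rule rev_image_eqI)
  qed
  hence "measure lebesgue (slab u e \<inter> cball 0 R) =
           \<bar>R\<bar> ^ DIM('a) * measure lebesgue (slab u (e / R) \<inter> cball 0 1)"
    by (metis measure_lebesgue_affine)
  thus ?thesis using R by simp
qed

lemma slab_cball_measure_mono:
  "e1 \<le> e2 \<Longrightarrow> measure lebesgue (slab u e1 \<inter> cball c r) \<le> measure lebesgue (slab u e2 \<inter> cball c r)"
  by (rule measure_mono_fmeasurable)
     (auto simp: slab_def fmeasurableD[OF slab_cball_lmeasurable] slab_cball_lmeasurable[unfolded slab_def])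

lemma power_one_plus_minus_diff_le:
  fixes d :: real
  assumes "0 \<le> d" "d \<le> 1/2"
  shows "(1 + d) ^ n - (1 - d) ^ n \<le> 2 * d * (real n * 2 ^ n)"
proof -
  have term_le: "(1 - d) ^ (n - Suc i) * (1 + d) ^ i \<le> 2 ^ n" if "i < n" for i
  proof -
    have "(1 - d) ^ (n - Suc i) \<le> 1" using assms by (intro power_le_one) auto
    moreover have "(1 + d) ^ i \<le> 2 ^ i" using assms by (intro power_mono) auto
    ultimately have "(1 - d) ^ (n - Suc i) * (1 + d) ^ i \<le> 1 * 2 ^ i"
      using assms by (intro mult_mono) auto
    also have "\<dots> \<le> 2 ^ n" using that by (simp add: power_increasing)
    finally show ?thesis .
  qed
  have "(1 + d) ^ n - (1 - d) ^ n = 2 * d * (\<Sum>i<n. (1 - d) ^ (n - Suc i) * (1 + d) ^ i)"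
    using power_diff_sumr2[of "1 + d" n "1 - d"] by simp
  also have "\<dots> \<le> 2 * d * (\<Sum>i<n. 2 ^ n)"
    using assms term_le by (intro mult_left_mono sum_mono) auto
  finally show ?thesis by simp
qed

lemma slab_shell_measure_le:
  fixes u :: "'a::euclidean_space"
  assumes u: "norm u = 1" and e: "e > 0" and d: "0 \<le> d" "d \<le> 1/2"
  shows "measure lebesgue (slab u e \<inter> shell d) \<le>
           (12 * real DIM('a) * 2 ^ DIM('a) * measure lebesgue (cball (0::'a) 2)) * e * d"
proof -
  define n where "n = DIM('a)"
  define M where "M = measure lebesgue (cball (0::'a) 2)"
  define A where "A = slab u e \<inter> cball (0::'a) (1 + d)"
  define B where "B = slab u e \<inter> cball (0::'a) (1 - d)"
  define G where "G = measure lebesgue (slab u (e / (1 - d)) \<inter> cball (0::'a) 1)"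
  have G_le: "G \<le> 3 * (e / (1 - d)) * M" unfolding G_def M_def
    using slab_unit_ball_measure_le[OF u, of "e / (1 - d)"] e d by simp
  have "slab u e \<inter> shell d \<subseteq> A - B" by (auto simp: A_def B_def shell_def)
  hence "measure lebesgue (slab u e \<inter> shell d) \<le> measure lebesgue (A - B)"
    unfolding A_def B_def
    by (intro measure_mono_fmeasurable fmeasurable_Diff slab_cball_lmeasurable sets.Int
          slab_lebesgue_measurable fmeasurableD[OF shell_lmeasurable] fmeasurableD[OF slab_cball_lmeasurable])
  also have "\<dots> = measure lebesgue A - measure lebesgue B"
    using d unfolding A_def B_def
    by (intro measure_Diff) (auto simp: fmeasurableD[OF slab_cball_lmeasurable] emeasure_eq_measure2[OF slab_cball_lmeasurable])
  also have "measure lebesgue A = (1 + d) ^ n * measure lebesgue (slab u (e / (1 + d)) \<inter> cball 0 1)"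
    unfolding A_def n_def using d by (intro slab_cball_rescale) auto
  also have "\<dots> \<le> (1 + d) ^ n * G"
    unfolding G_def using d e by (intro mult_left_mono slab_cball_measure_mono) (auto simp: field_simps)
  also have "measure lebesgue B = (1 - d) ^ n * G"
    unfolding B_def n_def G_def using d by (intro slab_cball_rescale) auto
  finally have "measure lebesgue (slab u e \<inter> shell d) \<le> ((1 + d) ^ n - (1 - d) ^ n) * G"
    by (simp add: algebra_simps)
  also have "\<dots> \<le> (2 * d * (real n * 2 ^ n)) * (3 * (e / (1 - d)) * M)"
    using power_one_plus_minus_diff_le[OF d] G_le d by (intro mult_mono) (auto simp: G_def)
  also have "\<dots> \<le> (2 * d * (real n * 2 ^ n)) * (3 * (2 * e) * M)"
    using d e by (intro mult_left_mono mult_right_mono) (auto simp: M_def field_simps)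
  finally show ?thesis by (simp add: n_def M_def algebra_simps)
qed

lemma measure_Int_cball_le_shift:
  assumes E: "E \<in> sets lebesgue" and L: "L \<in> lmeasurable"
    and gain: "E \<inter> (cball c r - cball c' r') \<subseteq> L"
  shows "measure lebesgue (E \<inter> cball c r) \<le> measure lebesgue (E \<inter> cball c' r') + measure lebesgue L"
proof -
  have E_ball: "E \<inter> cball x t \<in> lmeasurable" for x t
    using E by (metis Int_commute fmeasurable_Int_fmeasurable lmeasurable_cball)
  have "E \<inter> cball c r \<subseteq> (E \<inter> cball c' r') \<union> L" using gain by auto
  hence "measure lebesgue (E \<inter> cball c r) \<le> measure lebesgue ((E \<inter> cball c' r') \<union> L)"
    using E_ball L by (intro measure_mono_fmeasurable fmeasurableD) auto
  also have "\<dots> \<le> measure lebesgue (E \<inter> cball c' r') + measure lebesgue L"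
    using E_ball L by (intro measure_Un_le fmeasurableD)
  finally show ?thesis .
qed

lemma measure_Int_cball_split:
  assumes S: "S \<in> sets lebesgue" and T: "T \<in> sets lebesgue"
  shows "measure lebesgue (S \<inter> cball c r) =
           measure lebesgue (S \<inter> T \<inter> cball c r) + measure lebesgue ((S - T) \<inter> cball c r)"
proof -
  have ball_part: "A \<inter> cball c r \<in> lmeasurable" if "A \<in> sets lebesgue" for A
    using that by (metis Int_commute fmeasurable_Int_fmeasurable lmeasurable_cball)
  have "(S - T) \<inter> cball c r = (S \<inter> cball c r) - (S \<inter> T \<inter> cball c r)" by auto
  moreover have "measure lebesgue ((S \<inter> cball c r) - (S \<inter> T \<inter> cball c r)) =
      measure lebesgue (S \<inter> cball c r) - measure lebesgue (S \<inter> T \<inter> cball c r)"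
    using S T by (intro measure_Diff) (auto simp: emeasure_eq_measure2 ball_part fmeasurableD[OF ball_part])
  ultimately show ?thesis by simp
qed

lemma second_difference_le_boundary_layer:
  fixes C :: "'a::euclidean_space set" and v :: 'a
  defines "C' \<equiv> (+) v ` C"
  assumes C: "C \<in> sets lebesgue" and L: "L \<in> lmeasurable"
    and layer: "((C - C') \<union> (C' - C)) \<inter> ((cball v r - cball 0 r) \<union> (cball 0 r - cball v r)) \<subseteq> L"
  shows "\<bar>measure lebesgue (C \<inter> cball v r) + measure lebesgue (C \<inter> cball (- v) r)
            - 2 * measure lebesgue (C \<inter> cball 0 r)\<bar> \<le> 2 * measure lebesgue L"
proof -
  have C': "C' \<in> sets lebesgue" unfolding C'_def using C by (rule lebesgue_sets_translation)
  have shift: "measure lebesgue (C \<inter> cball w r) = measure lebesgue (C' \<inter> cball (v + w) r)" for w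
  proof -
    have "C' \<inter> cball (v + w) r = (+) v ` (C \<inter> cball w r)"
      unfolding C'_def cball_translation by (auto simp: image_Int)
    thus ?thesis by (simp add: measure_translation)
  qed
  have moved: "\<bar>measure lebesgue (E \<inter> cball v r) - measure lebesgue (E \<inter> cball 0 r)\<bar> \<le> measure lebesgue L"
    if "E \<subseteq> (C - C') \<union> (C' - C)" "E \<in> sets lebesgue" for E
  proof -
    have "E \<inter> (cball v r - cball 0 r) \<subseteq> L" "E \<inter> (cball 0 r - cball v r) \<subseteq> L"
      using that(1) layer by blast+
    thus ?thesis using measure_Int_cball_le_shift[OF that(2) L] by (smt (verit))
  qed
  have swap: "C' \<inter> C = C \<inter> C'" by auto
  note split_C = measure_Int_cball_split[OF C C']
    and split_C' = measure_Int_cball_split[OF C' C, unfolded swap]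
  have "\<bar>measure lebesgue ((C - C') \<inter> cball v r) - measure lebesgue ((C - C') \<inter> cball 0 r)\<bar> \<le> measure lebesgue L"
       "\<bar>measure lebesgue ((C' - C) \<inter> cball v r) - measure lebesgue ((C' - C) \<inter> cball 0 r)\<bar> \<le> measure lebesgue L"
    using C C' by (auto intro!: moved)
  moreover have "measure lebesgue (C \<inter> cball 0 r) = measure lebesgue (C' \<inter> cball v r)"
    "measure lebesgue (C \<inter> cball (- v) r) = measure lebesgue (C' \<inter> cball 0 r)"
    using shift[of 0] shift[of "- v"] by simp_all
  ultimately show ?thesis
    using split_C[of v r] split_C[of 0 r] split_C'[of v r] split_C'[of 0 r] by linarith
qed

definition polyhedral_cone :: "(nat \<Rightarrow> 'a::euclidean_space) \<Rightarrow> nat \<Rightarrow> 'a set" where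
  "polyhedral_cone a k = {x. \<forall>i<k. a i \<bullet> x \<le> 0}"

lemma closed_polyhedral_cone: "closed (polyhedral_cone a k)"
proof -
  have "polyhedral_cone a k = (\<Inter>i\<in>{..<k}. {x. a i \<bullet> x \<le> 0})" by (auto simp: polyhedral_cone_def)
  thus ?thesis by (simp add: closed_INT closed_halfspace_le)
qed

text \<open>A point of the cone \<open>C\<close> not in \<open>v + C\<close>, or vice versa, violates one defining inequality
  but not its translate, so it lies within distance \<open>|v|\<close> of that boundary hyperplane.\<close>

lemma polyhedral_cone_translate_symdiff:
  fixes a :: "nat \<Rightarrow> 'a::euclidean_space" and k :: nat
  defines "C \<equiv> polyhedral_cone a k"
  assumes nz: "\<forall>i<k. a i \<noteq> 0" and x: "x \<in> (C - (+) v ` C) \<union> ((+) v ` C - C)"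
  shows "\<exists>i<k. x \<in> slab ((1 / norm (a i)) *\<^sub>R a i) (norm v)"
proof -
  have "y \<in> (+) v ` C \<longleftrightarrow> y - v \<in> C" for y
    by (rule iffI) (auto intro!: image_eqI[where x = "y - v"])
  then obtain i where i: "i < k"
    "(a i \<bullet> x \<le> 0 \<and> a i \<bullet> (x - v) > 0) \<or> (a i \<bullet> x > 0 \<and> a i \<bullet> (x - v) \<le> 0)"
    using x unfolding C_def polyhedral_cone_def by (auto simp: not_le)
  have "\<bar>a i \<bullet> x\<bar> \<le> \<bar>a i \<bullet> v\<bar>" using i(2) by (auto simp: inner_diff_right)
  also have "\<dots> \<le> norm (a i) * norm v" by (rule Cauchy_Schwarz_ineq2)
  finally have "\<bar>a i \<bullet> x\<bar> / norm (a i) \<le> norm v" using nz i(1) by (simp add: field_simps)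
  thus ?thesis using i(1) by (auto simp: slab_def abs_mult)
qed

lemma cball_symdiff_subset_shell:
  fixes v :: "'a::euclidean_space"
  shows "(cball v 1 - cball 0 1) \<union> (cball 0 1 - cball v 1) \<subseteq> shell (norm v)"
proof
  fix x assume "x \<in> (cball v 1 - cball 0 1) \<union> (cball 0 1 - cball v 1)"
  moreover have "norm x \<le> norm v + norm (x - v)" "norm (x - v) \<le> norm x + norm v"
    using norm_triangle_ineq4[of x v] norm_triangle_sub[of x v] by (simp_all add: add.commute)
  ultimately show "x \<in> shell (norm v)" by (auto simp: shell_def dist_norm norm_minus_commute)
qed

lemma polyhedral_cone_second_difference:
  fixes a :: "nat \<Rightarrow> 'a::euclidean_space" and k :: nat
  defines "C \<equiv> polyhedral_cone a k"
  assumes nz: "\<forall>i<k. a i \<noteq> 0"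
  shows "\<exists>K. \<forall>v. norm v \<le> 1/2 \<longrightarrow>
           \<bar>measure lebesgue (C \<inter> cball v 1) + measure lebesgue (C \<inter> cball (- v) 1)
              - 2 * measure lebesgue (C \<inter> cball 0 1)\<bar> \<le> K * norm v ^ 2"
proof -
  define K0 where "K0 = 12 * real DIM('a) * 2 ^ DIM('a) * measure lebesgue (cball (0::'a) 2)"
  have "\<bar>measure lebesgue (C \<inter> cball v 1) + measure lebesgue (C \<inter> cball (- v) 1)
          - 2 * measure lebesgue (C \<inter> cball 0 1)\<bar> \<le> 2 * real k * K0 * norm v ^ 2"
    if v: "norm v \<le> 1/2" for v
  proof (cases "v = 0")
    case False
    define e where "e = norm v"
    define u where "u i = (1 / norm (a i)) *\<^sub>R a i" for i
    define L where "L = (\<Union>i\<in>{..<k}. slab (u i) e \<inter> shell e)"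
    have L_pieces: "slab (u i) e \<inter> shell e \<in> lmeasurable" for i
      by (metis Int_commute fmeasurable_Int_fmeasurable shell_lmeasurable slab_lebesgue_measurable)
    have L: "L \<in> lmeasurable" unfolding L_def using L_pieces by (intro fmeasurable.finite_UN) auto
    have layer: "((C - (+) v ` C) \<union> ((+) v ` C - C)) \<inter>
        ((cball v 1 - cball 0 1) \<union> (cball 0 1 - cball v 1)) \<subseteq> L"
      using polyhedral_cone_translate_symdiff[OF nz] cball_symdiff_subset_shell[of v]
      unfolding L_def C_def u_def e_def by blast
    have "measure lebesgue L \<le> (\<Sum>i<k. measure lebesgue (slab (u i) e \<inter> shell e))"
      unfolding L_def using L_pieces by (intro measure_UNION_le fmeasurableD) auto
    also have "\<dots> \<le> (\<Sum>i<k. K0 * e * e)"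
      unfolding K0_def using nz v False
      by (intro sum_mono slab_shell_measure_le) (auto simp: u_def e_def)
    finally have "measure lebesgue L \<le> real k * K0 * e ^ 2" by (simp add: power2_eq_square)
    moreover have "C \<in> sets lebesgue" unfolding C_def by (simp add: borel_closed closed_polyhedral_cone)
    ultimately show ?thesis
      using second_difference_le_boundary_layer[OF _ L layer] by (fastforce simp: e_def)
  qed simp
  thus ?thesis by blast
qed

text \<open>If the values of a complex-differentiable function on a real interval \<open>(0,e)\<close> stay within
  \<open>O(s^2)\<close> of a constant \<open>c\<close>, then \<open>F 0 = c\<close> and the difference quotients tend to \<open>0\<close>, so
  the derivative at \<open>0\<close> vanishes.\<close>

lemma deriv_zero_if_quadratically_flat:
  fixes F :: "complex \<Rightarrow> complex"
  assumes dF: "F field_differentiable at 0" and e: "e > 0"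
    and flat: "\<And>s. 0 < s \<Longrightarrow> s < e \<Longrightarrow> norm (F (complex_of_real s) - c) \<le> K * s^2"
  shows "deriv F 0 = 0"
proof -
  have small: "eventually (\<lambda>s. 0 < s \<and> s < e) (at_right (0::real))"
    using e by (intro eventually_at_rightI[of 0 e]) auto
  have to_zero: "((\<lambda>s::real. complex_of_real s) \<longlongrightarrow> 0) (at_right 0)"
    by (intro tendsto_eq_intros) auto
  have "((\<lambda>s. F (complex_of_real s)) \<longlongrightarrow> F 0) (at_right 0)"
    using isCont_tendsto_compose[OF field_differentiable_imp_continuous_at[OF dF] to_zero] by simp
  moreover have "((\<lambda>s. F (complex_of_real s)) \<longlongrightarrow> c) (at_right 0)"
  proof -
    have "((\<lambda>s. F (complex_of_real s) - c) \<longlongrightarrow> 0) (at_right 0)"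
      by (rule Lim_null_comparison[of _ "\<lambda>s. K * s^2"])
         (use small flat in \<open>auto elim!: eventually_mono intro!: tendsto_eq_intros\<close>)
    thus ?thesis by (simp add: Lim_null[symmetric])
  qed
  ultimately have F0: "F 0 = c" using tendsto_unique[OF trivial_limit_at_right_real] by blast
  have "((\<lambda>y. (F y - F 0) / (y - 0)) \<longlongrightarrow> deriv F 0) (at 0)"
    using dF DERIV_deriv_iff_field_differentiable has_field_derivative_iff by blast
  moreover have "filterlim (\<lambda>s::real. complex_of_real s) (at 0) (at_right 0)"
    unfolding filterlim_at using to_zero
    by (auto simp: eventually_at_right_less eventually_mono[OF eventually_at_right_less])
  ultimately have quotient_deriv:
    "((\<lambda>s. (F (complex_of_real s) - F 0) / complex_of_real s) \<longlongrightarrow> deriv F 0) (at_right 0)"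
    using filterlim_compose by fastforce
  have quotient_le: "norm ((F (complex_of_real s) - F 0) / complex_of_real s) \<le> K * s"
    if "0 < s \<and> s < e" for s
  proof -
    have "norm ((F (complex_of_real s) - F 0) / complex_of_real s) = norm (F (complex_of_real s) - c) / s"
      using that F0 by (simp add: norm_divide)
    also have "\<dots> \<le> K * s^2 / s" using flat that by (intro divide_right_mono) auto
    finally show ?thesis using that by (simp add: power2_eq_square)
  qed
  have "((\<lambda>s. (F (complex_of_real s) - F 0) / complex_of_real s) \<longlongrightarrow> 0) (at_right 0)"
    by (rule Lim_null_comparison[of _ "\<lambda>s. K * s"])
       (use small quotient_le in \<open>auto elim!: eventually_mono intro!: tendsto_eq_intros\<close>)
  thus ?thesis using quotient_deriv tendsto_unique[OF trivial_limit_at_right_real] by blast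
qed

lemma deriv_add_zero_if_even_sum:
  fixes W1 W2 :: "complex \<Rightarrow> complex" and g :: "'a::real_normed_vector \<Rightarrow> real"
  assumes e: "e > 0" and W1: "W1 holomorphic_on ball 0 e" and W2: "W2 holomorphic_on ball 0 e"
    and sum: "\<And>s. 0 < s \<Longrightarrow> s < e \<Longrightarrow>
                W1 (complex_of_real s) + W2 (complex_of_real s) = complex_of_real (g (s *\<^sub>R d) + g (- (s *\<^sub>R d)))"
    and r: "r > 0"
    and flat: "\<And>v. norm v \<le> r \<Longrightarrow> \<bar>g v + g (- v) - 2 * g 0\<bar> \<le> K * norm v ^ 2"
  shows "deriv W1 0 + deriv W2 0 = 0"
proof -
  have dW1: "W1 field_differentiable at 0" and dW2: "W2 field_differentiable at 0"
    using e W1 W2 by (auto intro: holomorphic_on_imp_differentiable_at[of _ "ball 0 e"])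
  define e' where "e' = min e (r / (norm d + 1))"
  have norm_d: "norm d + 1 > 0" by (simp add: add_nonneg_pos)
  have "deriv (\<lambda>z. W1 z + W2 z) 0 = 0"
  proof (rule deriv_zero_if_quadratically_flat)
    show "(\<lambda>z. W1 z + W2 z) field_differentiable at 0" using dW1 dW2 by (rule field_differentiable_add)
    show "e' > 0" using e r norm_d by (simp add: e'_def)
  next
    fix s :: real assume s: "0 < s" "s < e'"
    have "s * norm d \<le> s * (norm d + 1)" using s by simp
    also have "\<dots> \<le> r" using s norm_d by (simp add: e'_def field_simps)
    finally have "norm (s *\<^sub>R d) \<le> r" using s by simp
    hence "\<bar>g (s *\<^sub>R d) + g (- (s *\<^sub>R d)) - 2 * g 0\<bar> \<le> K * norm (s *\<^sub>R d) ^ 2"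
      by (rule flat)
    also have "\<dots> = K * norm d ^ 2 * s ^ 2" using s by (simp add: power_mult_distrib)
    finally have "\<bar>g (s *\<^sub>R d) + g (- (s *\<^sub>R d)) - 2 * g 0\<bar> \<le> K * norm d ^ 2 * s ^ 2" .
    moreover have "W1 (complex_of_real s) + W2 (complex_of_real s) - complex_of_real (2 * g 0) =
        complex_of_real (g (s *\<^sub>R d) + g (- (s *\<^sub>R d)) - 2 * g 0)"
      using sum[of s] s by (simp add: e'_def)
    ultimately show "norm (W1 (complex_of_real s) + W2 (complex_of_real s) - complex_of_real (2 * g 0))
        \<le> K * norm d ^ 2 * s ^ 2"
      by (metis norm_of_real)
  qed
  thus ?thesis by (simp add: deriv_add[OF dW1 dW2])
qed

lemma hyperplanes_common_point:
  fixes a :: "nat \<Rightarrow> 'a::euclidean_space"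
  assumes inj: "inj_on a {..<k}" and ind: "independent (a ` {..<k})"
  shows "\<exists>q. \<forall>i<k. a i \<bullet> q = b i"
proof -
  obtain g :: "'a \<Rightarrow> real" where g: "linear g" "\<forall>x\<in>a ` {..<k}. g x = b (inv_into {..<k} a x)"
    using real_vector.linear_independent_extend[OF ind, of "\<lambda>x. b (inv_into {..<k} a x)"] by blast
  define q where "q = (\<Sum>j\<in>Basis. g j *\<^sub>R j)"
  have g_inner: "g x = x \<bullet> q" for x
  proof -
    have "g x \<bullet> 1 = (\<Sum>i\<in>Basis. x \<bullet> i * (g i \<bullet> 1))" by (rule Linear_Algebra.linear_componentwise[OF g(1)])
    thus ?thesis by (simp add: q_def inner_sum_right mult.commute)
  qed
  have "a i \<bullet> q = b i" if "i < k" for i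
    using g(2) g_inner[of "a i"] inv_into_f_f[OF inj, of i] that by simp
  thus ?thesis by blast
qed

lemma ball_vol_rescale:
  fixes P C :: "'a::euclidean_space set"
  assumes m: "m \<noteq> 0" and PC: "\<And>x. x \<in> P \<longleftrightarrow> m *\<^sub>R (x - q) \<in> C"
  shows "\<bar>m\<bar> ^ DIM('a) * ball_vol P p0 (1 / \<bar>m\<bar>) = measure lebesgue (C \<inter> cball (m *\<^sub>R (p0 - q)) 1)"
proof -
  define T where "T x = m *\<^sub>R x + - (m *\<^sub>R q)" for x
  have T: "T x = m *\<^sub>R (x - q)" for x by (simp add: T_def algebra_simps)
  have T_dist: "dist (T p0) (T x) = \<bar>m\<bar> * dist p0 x" for x
    unfolding T dist_norm by (simp flip: scaleR_diff_right)
  have "T ` (P \<inter> cball p0 (1 / \<bar>m\<bar>)) = C \<inter> cball (T p0) 1"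
  proof (intro equalityI subsetI)
    fix y assume "y \<in> T ` (P \<inter> cball p0 (1 / \<bar>m\<bar>))"
    then obtain x where x: "x \<in> P" "dist p0 x \<le> 1 / \<bar>m\<bar>" "y = T x" by auto
    have "y \<in> C" using PC[of x] x by (simp add: T)
    moreover have "dist (T p0) y \<le> 1" using T_dist[of x] x m by (simp add: field_simps)
    ultimately show "y \<in> C \<inter> cball (T p0) 1" by simp
  next
    fix y assume y: "y \<in> C \<inter> cball (T p0) 1"
    define x where "x = q + (1 / m) *\<^sub>R y"
    have "T x = y" using m by (simp add: T x_def)
    moreover have "x \<in> P" using PC[of x] y \<open>T x = y\<close> by (simp add: T)
    moreover have "dist p0 x \<le> 1 / \<bar>m\<bar>" using y T_dist[of x] \<open>T x = y\<close> m by (simp add: field_simps)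
    ultimately show "y \<in> T ` (P \<inter> cball p0 (1 / \<bar>m\<bar>))" by auto
  qed
  hence "measure lebesgue (C \<inter> cball (T p0) 1) = \<bar>m\<bar> ^ DIM('a) * measure lebesgue (P \<inter> cball p0 (1 / \<bar>m\<bar>))"
    unfolding T_def by (metis measure_lebesgue_affine)
  thus ?thesis using m by (simp add: ball_vol_def T)
qed

lemma ball_vol_rescale_to_cone:
  fixes a :: "nat \<Rightarrow> 'a::euclidean_space" and k :: nat
  assumes q: "\<forall>i<k. a i \<bullet> q = b i" and s: "s > 0"
  shows "s ^ DIM('a) * ball_vol {x. \<forall>i<k. a i \<bullet> x \<le> b i} p0 (1 / s) =
           measure lebesgue (polyhedral_cone a k \<inter> cball (s *\<^sub>R (p0 - q)) 1)"
    and "s ^ DIM('a) * ball_vol {x. \<forall>i<k. b i \<le> a i \<bullet> x} p0 (1 / s) =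
           measure lebesgue (polyhedral_cone a k \<inter> cball (- (s *\<^sub>R (p0 - q))) 1)"
proof -
  have shifted: "a i \<bullet> (x - q) = a i \<bullet> x - b i" if "i < k" for i x
    using q that by (simp add: inner_diff_right)
  have "x \<in> {x. \<forall>i<k. a i \<bullet> x \<le> b i} \<longleftrightarrow> s *\<^sub>R (x - q) \<in> polyhedral_cone a k" for x
    using s by (simp add: polyhedral_cone_def shifted mult_le_0_iff zero_le_mult_iff)
  from ball_vol_rescale[of s, OF _ this] s
  show "s ^ DIM('a) * ball_vol {x. \<forall>i<k. a i \<bullet> x \<le> b i} p0 (1 / s) =
          measure lebesgue (polyhedral_cone a k \<inter> cball (s *\<^sub>R (p0 - q)) 1)" by simp
  have "x \<in> {x. \<forall>i<k. b i \<le> a i \<bullet> x} \<longleftrightarrow> (- s) *\<^sub>R (x - q) \<in> polyhedral_cone a k" for x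
    using s by (simp add: polyhedral_cone_def shifted mult_le_0_iff zero_le_mult_iff)
  from ball_vol_rescale[of "- s", OF _ this] s
  show "s ^ DIM('a) * ball_vol {x. \<forall>i<k. b i \<le> a i \<bullet> x} p0 (1 / s) =
          measure lebesgue (polyhedral_cone a k \<inter> cball (- (s *\<^sub>R (p0 - q))) 1)" by simp
qed

lemma closure_complement_halfspace:
  assumes "a \<noteq> 0"
  shows "closure (UNIV - {x. a \<bullet> x \<le> b}) = {x. b \<le> a \<bullet> x}"
proof -
  have "UNIV - {x. a \<bullet> x \<le> b} = {x. a \<bullet> x > b}" by auto
  thus ?thesis using assms by simp
qed

theorem mainTheorem10:
  fixes a :: "nat \<Rightarrow> 'a::euclidean_space" and b :: "nat \<Rightarrow> real" and k :: nat
    and p0 :: 'a and W1 W2 :: "complex \<Rightarrow> complex"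
  defines "H \<equiv> \<lambda>i. {x. a i \<bullet> x \<le> b i}"
  assumes "1 \<le> k" and "k \<le> DIM('a)"
    and "inj_on a {..<k}" and "independent (a ` {..<k})"
    and "is_W_ext (\<Inter>i\<in>{..<k}. H i) p0 W1"
    and "is_W_ext (\<Inter>i\<in>{..<k}. closure (UNIV - H i)) p0 W2"
  shows "deriv W1 0 + deriv W2 0 = 0"
proof -
  have nz: "\<forall>i<k. a i \<noteq> 0"
    using assms(5) real_vector.dependent_zero[of "a ` {..<k}"] by (metis image_eqI lessThan_iff)
  obtain q where q: "\<forall>i<k. a i \<bullet> q = b i" using hyperplanes_common_point[OF assms(4,5)] by blast
  define g where "g v = measure lebesgue (polyhedral_cone a k \<inter> cball v 1)" for v
  have P: "(\<Inter>i\<in>{..<k}. H i) = {x. \<forall>i<k. a i \<bullet> x \<le> b i}" by (auto simp: H_def)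
  obtain e1 where e1: "e1 > 0" "W1 holomorphic_on ball 0 e1"
    "\<And>s. 0 < s \<Longrightarrow> s < e1 \<Longrightarrow> W1 (complex_of_real s) = complex_of_real (g (s *\<^sub>R (p0 - q)))"
    using assms(6) ball_vol_rescale_to_cone(1)[OF q] unfolding is_W_ext_def P g_def by force
  have P': "(\<Inter>i\<in>{..<k}. closure (UNIV - H i)) = {x. \<forall>i<k. b i \<le> a i \<bullet> x}"
    using nz by (auto simp: H_def closure_complement_halfspace)
  obtain e2 where e2: "e2 > 0" "W2 holomorphic_on ball 0 e2"
    "\<And>s. 0 < s \<Longrightarrow> s < e2 \<Longrightarrow> W2 (complex_of_real s) = complex_of_real (g (- (s *\<^sub>R (p0 - q))))"
    using assms(7) ball_vol_rescale_to_cone(2)[OF q] unfolding is_W_ext_def P' g_def by force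
  obtain K where "\<forall>v. norm v \<le> 1/2 \<longrightarrow> \<bar>g v + g (- v) - 2 * g 0\<bar> \<le> K * norm v ^ 2"
    using polyhedral_cone_second_difference[OF nz] unfolding g_def by blast
  moreover have "W1 holomorphic_on ball 0 (min e1 e2)" "W2 holomorphic_on ball 0 (min e1 e2)"
    using e1(2) e2(2) by (auto elim!: holomorphic_on_subset simp: subset_ball)
  ultimately show ?thesis
    using e1 e2 by (intro deriv_add_zero_if_even_sum[of "min e1 e2" W1 W2 g "p0 - q" "1/2" K]) auto
qed

end
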